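(* Let $\epsilon\in(0,1)$, $K\ge3$, $C>K$, $\delta\in(0,1)$, and let $g:[0,1]\to[1,K]$ be non-decreasing. Let $f(\lambda)=\frac{C}{\lambda^2}+\frac{g(\lambda)}{\epsilon^2}$ and let $\lambda^*\in(0,1]$ be a minimizer of $f$. Suppose that evaluating $g$ at $\lambda$ costs $O(C\ln(K/\delta)/\lambda^2)$ samples. Then SolveOpt returns $\hat\lambda$ with $f(\hat\lambda)\le50f(\lambda^* )$ while using at most $O(f(\lambda^* )\ln(K/\delta)\ln(1/\epsilon))$ samples.
   Context: SolveOpt$(\epsilon,K,C,g)$: evaluate $g(1)$; set $U=1$, $L=\sqrt{\frac{C}{C+(g(1)-1)/\epsilon^2}}$, $\lambda=1$; while $\lambda\ge L$: evaluate $g(\lambda)$; if $f(\lambda)<f(U)$, set $U\leftarrow\lambda$ and $L\leftarrow\sqrt{\frac{C}{C/\lambda^2+(g(\lambda)-1)/\epsilon^2}}$; then set $\lambda\leftarrow\lambda/5$. Return $\hat\lambda=U$. *)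

theory Defs
  imports Complex_Main
begin

definition fobj :: "real \<Rightarrow> real \<Rightarrow> (real \<Rightarrow> real) \<Rightarrow> real \<Rightarrow> real" where
  "fobj eps C g lam = C / lam^2 + g lam / eps^2"

text \<open>State (U, L) of SolveOpt before the loop iteration with index k,
  i.e. before processing lambda = (1/5)^k (assuming the loop has not stopped yet).\<close>
fun solve_st :: "real \<Rightarrow> real \<Rightarrow> (real \<Rightarrow> real) \<Rightarrow> nat \<Rightarrow> real \<times> real" where
  "solve_st eps C g 0 = (1, sqrt (C / (C + (g 1 - 1) / eps^2)))"
| "solve_st eps C g (Suc k) =
     (let (U, L) = solve_st eps C g k; lam = (1/5::real)^k in
      if fobj eps C g lam < fobj eps C g U
      then (lam, sqrt (C / (C / lam^2 + (g lam - 1) / eps^2)))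
      else (U, L))"

text \<open>SolveOpt terminates iff some loop test fails; then the number of executed
  loop iterations is the first index k with (1/5)^k < L.\<close>
definition solve_terminates :: "real \<Rightarrow> real \<Rightarrow> (real \<Rightarrow> real) \<Rightarrow> bool" where
  "solve_terminates eps C g = (\<exists>k. (1/5::real)^k < snd (solve_st eps C g k))"

definition solve_iters :: "real \<Rightarrow> real \<Rightarrow> (real \<Rightarrow> real) \<Rightarrow> nat" where
  "solve_iters eps C g = (LEAST k. (1/5::real)^k < snd (solve_st eps C g k))"

definition solve_opt :: "real \<Rightarrow> real \<Rightarrow> (real \<Rightarrow> real) \<Rightarrow> real" where
  "solve_opt eps C g = fst (solve_st eps C g (solve_iters eps C g))"

text \<open>Total samples: one evaluation of g(1) before the loop, plus one evaluation
  of g at (1/5)^k in each executed loop iteration k; cost lam is the number of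
  samples used to evaluate g at lam.\<close>
definition solve_cost :: "(real \<Rightarrow> real) \<Rightarrow> real \<Rightarrow> real \<Rightarrow> (real \<Rightarrow> real) \<Rightarrow> real" where
  "solve_cost cost eps C g = cost 1 + (\<Sum>k<solve_iters eps C g. cost ((1/5::real)^k))"

end

theory Submission
  imports Defs
begin

text \<open>SolveOpt scans the grid (1/5)^k, keeping in U the best point seen so far. Since
  f(mu) \<ge> C/mu^2 + 1/eps^2, the exit test lambda < L, i.e. f(U) - 1/eps^2 < C/lambda^2,
  certifies that no later grid point can beat U. So the returned point is at least as good as
  every grid point, in particular as the grid point t with lstar/5 < t \<le> lstar, and
  f(t) \<le> 25 f(lstar) because g is non-decreasing. In the last executed iteration n the loop
  condition still held, which gives C 25^n \<le> f(t) \<le> 25 f(lstar); hence the geometric sum of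
  the evaluation costs, of order C 25^k ln(K/delta) for k \<le> n, is O(f(lstar) ln(K/delta)),
  even without the factor ln(1/eps).\<close>

abbreviation solve_stops :: "real \<Rightarrow> real \<Rightarrow> (real \<Rightarrow> real) \<Rightarrow> nat \<Rightarrow> bool" where
  "solve_stops eps C g k \<equiv> (1/5::real)^k < snd (solve_st eps C g k)"

lemma less_sqrt_div_iff:
  fixes x C D :: real
  assumes "0 < x" "0 < C" "0 < D"
  shows "x < sqrt (C / D) \<longleftrightarrow> D < C / x^2"
proof -
  have "x < sqrt (C / D) \<longleftrightarrow> x^2 < C / D"
    using assms(1) by (meson less_imp_le not_le real_le_lsqrt real_less_rsqrt)
  also have "\<dots> \<longleftrightarrow> D < C / x^2"
    using assms by (simp add: field_simps)
  finally show ?thesis .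
qed

lemma exists_power_between:
  fixes q x :: real
  assumes "0 < q" "q < 1" "0 < x" "x \<le> 1"
  shows "\<exists>j. q * x < q^j \<and> q^j \<le> x"
proof -
  obtain n where "q^n < x"
    using real_arch_pow_inv assms by blast
  then have ex: "\<exists>j. q^j \<le> x" by (blast intro: less_imp_le)
  define j where "j = (LEAST j. q^j \<le> x)"
  have "q^j \<le> x"
    unfolding j_def using ex by (rule LeastI_ex)
  moreover have "q * x < q^j"
  proof (cases j)
    case 0
    have "q * x \<le> q"
      using assms by (simp add: mult_left_le)
    then show ?thesis using 0 assms(2) by simp
  next
    case (Suc i)
    then have "\<not> q^i \<le> x"
      using not_less_Least[of i "\<lambda>j. q^j \<le> x"] by (simp add: j_def)
    then show ?thesis using Suc assms(1) by simp
  qed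
  ultimately show ?thesis by blast
qed

lemma grid_sq: "C / ((1/5::real)^k)^2 = C * 25^k"
  by (simp add: power_one_over power2_eq_square flip: power_mult_distrib)

lemma fobj_grid: "fobj eps C g ((1/5)^k) = C * 25^k + g ((1/5)^k) / eps^2"
  by (simp add: fobj_def grid_sq)

lemma fobj_grid_ge:
  assumes "1 \<le> g ((1/5)^k)"
  shows "C * 25^k \<le> fobj eps C g ((1/5)^k) - 1 / eps^2"
  using divide_right_mono[OF assms, of "eps^2"] by (simp add: fobj_grid)

lemma fobj_le_scaled:
  assumes "0 < r" "r \<le> 1" "0 < lam" "r * lam \<le> x" "0 \<le> C" "g x \<le> g lam" "0 \<le> g lam"
  shows "fobj eps C g x \<le> fobj eps C g lam / r^2"
proof -
  have "0 < r * lam"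
    using assms by simp
  moreover have "0 < x"
    using calculation assms(4) by linarith
  ultimately have "C / x^2 \<le> C / (r * lam)^2"
    using assms(4,5) by (intro divide_left_mono power_mono mult_pos_pos) auto
  also have "\<dots> = (C / lam^2) / r^2"
    by (simp add: power_mult_distrib)
  finally have C_part: "C / x^2 \<le> (C / lam^2) / r^2" .
  have "g x / eps^2 \<le> g lam / eps^2"
    using assms by (simp add: divide_right_mono)
  also have "\<dots> \<le> (g lam / eps^2) / r^2"
  proof -
    have "0 < r^2" "r^2 \<le> 1"
      using assms(1,2) by (simp_all add: power_le_one)
    moreover have "(g lam / eps^2) * r^2 \<le> g lam / eps^2"
      using calculation(2) assms(7) by (intro mult_left_le) simp_all
    ultimately show ?thesis by (metis pos_le_divide_eq)
  qed
  finally have g_part: "g x / eps^2 \<le> (g lam / eps^2) / r^2" .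
  show ?thesis
    using C_part g_part by (simp add: fobj_def add_divide_distrib)
qed

lemma fobj_ge_const:
  assumes "lam \<in> {0<..1}" "0 \<le> C" "0 \<le> g lam"
  shows "C \<le> fobj eps C g lam"
proof -
  have "C \<le> C / lam^2"
    using assms(1,2) by (simp add: le_divide_eq power_le_one mult_left_le)
  moreover have "0 \<le> g lam / eps^2"
    using assms(3) by simp
  ultimately show ?thesis
    by (simp add: fobj_def)
qed

lemma exists_grid_fobj_le:
  assumes "lam \<in> {0<..1}" "0 \<le> C" "mono_on {0..1} g" "\<forall>x\<in>{0..1}. 0 \<le> g x"
  shows "\<exists>j. fobj eps C g ((1/5)^j) \<le> 25 * fobj eps C g lam"
proof -
  obtain j where j: "1/5 * lam < (1/5)^j" "(1/5::real)^j \<le> lam"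
    using exists_power_between[of "1/5" lam] assms(1) by auto
  have "g ((1/5)^j) \<le> g lam"
    using j assms(1) by (intro mono_onD[OF assms(3)]) auto
  then have "fobj eps C g ((1/5)^j) \<le> fobj eps C g lam / (1/5)^2"
    using j assms by (intro fobj_le_scaled) auto
  also have "\<dots> = 25 * fobj eps C g lam"
    by (simp add: power2_eq_square)
  finally show ?thesis ..
qed

lemma solve_st_fst_range: "fst (solve_st eps C g k) \<in> {0<..1}"
  by (induction k) (auto simp: Let_def power_le_one split: prod.split)

lemma solve_st_snd:
  "snd (solve_st eps C g k) = sqrt (C / (fobj eps C g (fst (solve_st eps C g k)) - 1 / eps^2))"
  by (induction k) (auto simp: Let_def fobj_def diff_divide_distrib split: prod.split)

lemma solve_st_fobj_Suc:
  "fobj eps C g (fst (solve_st eps C g (Suc k))) =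
    min (fobj eps C g (fst (solve_st eps C g k))) (fobj eps C g ((1/5)^k))"
  by (auto simp: Let_def split: prod.split)

lemma solve_st_fobj_le_one: "fobj eps C g (fst (solve_st eps C g k)) \<le> fobj eps C g 1"
  by (induction k) (auto simp del: solve_st.simps(2) simp: solve_st_fobj_Suc)

lemma solve_st_fobj_le_grid:
  "j < k \<Longrightarrow> fobj eps C g (fst (solve_st eps C g k)) \<le> fobj eps C g ((1/5)^j)"
  by (induction k) (auto simp del: solve_st.simps(2) simp: solve_st_fobj_Suc less_Suc_eq)

lemma solve_stops_iff:
  assumes "0 < C" "\<forall>x\<in>{0<..1}. 1 \<le> g x"
  shows "solve_stops eps C g k \<longleftrightarrow>
    fobj eps C g (fst (solve_st eps C g k)) - 1 / eps^2 < C * 25^k"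
proof -
  define U where "U = fst (solve_st eps C g k)"
  have U: "0 < U" "U \<le> 1" "1 \<le> g U"
    using solve_st_fst_range[of eps C g k] assms(2) by (auto simp: U_def)
  have "0 < C / U^2"
    using U assms(1) by simp
  also have "\<dots> \<le> fobj eps C g U - 1 / eps^2"
    using U by (simp add: fobj_def diff_divide_distrib[symmetric])
  finally have "0 < fobj eps C g U - 1 / eps^2" .
  then show ?thesis
    using less_sqrt_div_iff[of "(1/5)^k" C] assms(1)
    by (simp add: solve_st_snd grid_sq U_def)
qed

lemma solve_stops_fobj_le_grid:
  assumes "0 < C" "\<forall>x\<in>{0<..1}. 1 \<le> g x" "solve_stops eps C g k"
  shows "fobj eps C g (fst (solve_st eps C g k)) \<le> fobj eps C g ((1/5)^j)"
proof (cases "j < k")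
  case True
  then show ?thesis by (rule solve_st_fobj_le_grid)
next
  case False
  have "fobj eps C g (fst (solve_st eps C g k)) - 1 / eps^2 < C * 25^k"
    using assms solve_stops_iff by blast
  also have "\<dots> \<le> C * 25^j"
    using False assms(1) by simp
  also have "\<dots> \<le> fobj eps C g ((1/5)^j) - 1 / eps^2"
    using assms(2) by (intro fobj_grid_ge) (simp add: power_le_one)
  finally show ?thesis by simp
qed

lemma not_solve_stops_grid:
  assumes "0 < C" "\<forall>x\<in>{0<..1}. 1 \<le> g x" "\<not> solve_stops eps C g k"
  shows "C * 25^k \<le> fobj eps C g ((1/5)^j) - 1 / eps^2"
proof (cases "j < k")
  case True
  have "C * 25^k \<le> fobj eps C g (fst (solve_st eps C g k)) - 1 / eps^2"
    using assms solve_stops_iff by (meson not_le)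
  also have "\<dots> \<le> fobj eps C g ((1/5)^j) - 1 / eps^2"
    using solve_st_fobj_le_grid[OF True] by simp
  finally show ?thesis .
next
  case False
  then have "C * 25^k \<le> C * 25^j"
    using assms(1) by simp
  also have "\<dots> \<le> fobj eps C g ((1/5)^j) - 1 / eps^2"
    using assms(2) by (intro fobj_grid_ge) (simp add: power_le_one)
  finally show ?thesis .
qed

lemma solve_terminatesI:
  assumes "0 < C" "\<forall>x\<in>{0<..1}. 1 \<le> g x"
  shows "solve_terminates eps C g"
proof -
  obtain k where k: "(fobj eps C g 1 - 1 / eps^2) / C < 25^k"
    using real_arch_pow[of 25] by auto
  have "fobj eps C g (fst (solve_st eps C g k)) - 1 / eps^2 < C * 25^k"
    using k solve_st_fobj_le_one[of eps C g k] assms(1) by (simp add: field_simps)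
  then show ?thesis
    unfolding solve_terminates_def using solve_stops_iff[OF assms] by blast
qed

lemma not_solve_stops_0:
  assumes "0 < C" "\<forall>x\<in>{0<..1}. 1 \<le> g x"
  shows "\<not> solve_stops eps C g 0"
proof -
  have "C * 25^0 \<le> fobj eps C g (fst (solve_st eps C g 0)) - 1 / eps^2"
    using fobj_grid_ge[of g 0 C eps] assms(2) by simp
  then show ?thesis
    using solve_stops_iff[OF assms, where k = 0] by (meson not_le)
qed

lemma solve_iters_stops:
  assumes "0 < C" "\<forall>x\<in>{0<..1}. 1 \<le> g x"
  shows "solve_stops eps C g (solve_iters eps C g)"
  using solve_terminatesI[OF assms] unfolding solve_terminates_def solve_iters_def
  by (rule LeastI_ex)

lemma solve_iters_Suc:
  assumes "0 < C" "\<forall>x\<in>{0<..1}. 1 \<le> g x"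
  obtains n where "solve_iters eps C g = Suc n" "\<not> solve_stops eps C g n"
proof -
  obtain n where n: "solve_iters eps C g = Suc n"
    using solve_iters_stops[OF assms, where eps = eps]
      not_solve_stops_0[OF assms, where eps = eps]
    by (cases "solve_iters eps C g") auto
  then have "\<not> solve_stops eps C g n"
    using not_less_Least[of n "solve_stops eps C g"] unfolding solve_iters_def by simp
  then show ?thesis
    using that n by simp
qed

lemma solve_opt_le_grid:
  assumes "0 < C" "\<forall>x\<in>{0<..1}. 1 \<le> g x"
  shows "fobj eps C g (solve_opt eps C g) \<le> fobj eps C g ((1/5)^j)"
  unfolding solve_opt_def by (rule solve_stops_fobj_le_grid[OF assms solve_iters_stops[OF assms]])

lemma solve_cost_le_grid:
  assumes "0 < C" "\<forall>x\<in>{0<..1}. 1 \<le> g x" "0 \<le> A"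
    and cost: "\<And>k. cost ((1/5)^k) \<le> A * C * 25^k"
  shows "solve_cost cost eps C g \<le> A * (25 * fobj eps C g ((1/5)^j) + 23 * C) / 24"
proof -
  obtain n where n: "solve_iters eps C g = Suc n" "\<not> solve_stops eps C g n"
    using solve_iters_Suc[OF assms(1,2)] by blast
  have "0 \<le> 1 / eps^2"
    by simp
  then have last: "C * 25^n \<le> fobj eps C g ((1/5)^j)"
    using not_solve_stops_grid[OF assms(1,2) n(2), of j] by linarith
  have "solve_cost cost eps C g \<le> A * C + (\<Sum>k<Suc n. A * C * 25^k)"
    unfolding solve_cost_def n(1) using cost[of 0] by (intro add_mono sum_mono cost) simp_all
  also have "\<dots> = A * (25 * (C * 25^n) + 23 * C) / 24"
    by (simp add: sum_distrib_left[symmetric] sum_gp_strict field_simps)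
  also have "\<dots> \<le> A * (25 * fobj eps C g ((1/5)^j) + 23 * C) / 24"
    using last assms(3) by (intro divide_right_mono mult_left_mono) simp_all
  finally show ?thesis .
qed

theorem theoremB3:
  fixes c\<^sub>g :: real
  assumes "c\<^sub>g > 0"
  shows "\<exists>c::real. \<forall>eps K C \<delta> (g::real \<Rightarrow> real) lstar (cost::real \<Rightarrow> real).
     0 < eps \<and> eps < 1 \<and> K \<ge> 3 \<and> C > K \<and> 0 < \<delta> \<and> \<delta> < 1 \<and>
     (\<forall>x\<in>{0..1}. 1 \<le> g x \<and> g x \<le> K) \<and> mono_on {0..1} g \<and>
     lstar \<in> {0<..1} \<and> (\<forall>lam\<in>{0<..1}. fobj eps C g lstar \<le> fobj eps C g lam) \<and>
     (\<forall>lam\<in>{0<..1}. cost lam \<le> c\<^sub>g * C * ln (K / \<delta>) / lam^2)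
     \<longrightarrow> solve_terminates eps C g \<and>
         fobj eps C g (solve_opt eps C g) \<le> 50 * fobj eps C g lstar \<and>
         solve_cost cost eps C g \<le> c * fobj eps C g lstar * ln (K / \<delta>) * (1 + ln (1 / eps))"
proof (intro exI[of _ "27 * c\<^sub>g"] allI impI, elim conjE)
  fix eps K C \<delta> and g :: "real \<Rightarrow> real" and lstar and cost :: "real \<Rightarrow> real"
  assume eps: "0 < eps" "eps < 1" and K: "3 \<le> K" "K < C" and \<delta>: "0 < \<delta>" "\<delta> < 1"
    and g_range: "\<forall>x\<in>{0..1}. 1 \<le> g x \<and> g x \<le> K" and g_mono: "mono_on {0..1} g"
    and lstar: "lstar \<in> {0<..1}" and "\<forall>lam\<in>{0<..1}. fobj eps C g lstar \<le> fobj eps C g lam"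
    and cost: "\<forall>lam\<in>{0<..1}. cost lam \<le> c\<^sub>g * C * ln (K / \<delta>) / lam^2"
  define fstar where "fstar = fobj eps C g lstar"
  define A where "A = c\<^sub>g * ln (K / \<delta>)"
  have C: "0 < C" and g_ge: "\<forall>x\<in>{0<..1}. 1 \<le> g x" and g_nonneg: "\<forall>x\<in>{0..1}. 0 \<le> g x"
    using K g_range by force+
  obtain j where j: "fobj eps C g ((1/5)^j) \<le> 25 * fstar"
    using exists_grid_fobj_le[OF lstar less_imp_le[OF C] g_mono g_nonneg, of eps]
    unfolding fstar_def by blast
  have C_le: "C \<le> fstar"
    using fobj_ge_const lstar C g_nonneg unfolding fstar_def by fastforce
  have A: "0 \<le> A"
    using assms K \<delta> by (simp add: A_def)
  have cost_grid: "cost ((1/5)^k) \<le> A * C * 25^k" for k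
    using cost[rule_format, of "(1/5)^k"] grid_sq[of "A * C" k]
    by (simp add: A_def power_le_one mult_ac)
  have quality: "fobj eps C g (solve_opt eps C g) \<le> 50 * fstar"
    using solve_opt_le_grid[OF C g_ge, of eps j] j C_le C by simp
  have "solve_cost cost eps C g \<le> A * (25 * fobj eps C g ((1/5)^j) + 23 * C) / 24"
    by (rule solve_cost_le_grid[OF C g_ge A cost_grid])
  also have "\<dots> \<le> A * (25 * (25 * fstar) + 23 * fstar) / 24"
    using j C_le A by (intro divide_right_mono mult_left_mono add_mono) simp_all
  also have "\<dots> = 27 * A * fstar"
    by simp
  also have "\<dots> \<le> 27 * A * fstar * (1 + ln (1 / eps))"
    using A C C_le eps by (simp add: algebra_simps)
  finally show "solve_terminates eps C g \<and>
      fobj eps C g (solve_opt eps C g) \<le> 50 * fobj eps C g lstar \<and>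
      solve_cost cost eps C g \<le> 27 * c\<^sub>g * fobj eps C g lstar * ln (K / \<delta>) * (1 + ln (1 / eps))"
    using solve_terminatesI[OF C g_ge] quality by (simp add: A_def fstar_def mult_ac)
qed

end
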